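(* Let $m\le d$ and $B>0$, let $Y$ be a $d\times m$ random matrix whose entries $Y_{ij}$ are independent sub-Gaussian random variables with moment $B$, and let $\Sigma$ be a diagonal $d\times d$ PSD matrix with $\Sigma\preceq I$. Then for all $t\ge0$ and $\epsilon\in(0,1)$, \[ \mathbb{P}[\|\sqrt{\Sigma}Y\|\ge t]\le\mathcal{N}_m(\epsilon)\exp\Big(\frac{\mathrm{tr}(\Sigma)}{2}-\frac{t^2(1-\epsilon)^2}{4B^2}\Big). \]
   Context: A real random variable $Z$ is sub-Gaussian with moment $B$ if $\mathbb{E}[\exp(sZ)]\le\exp(s^2B^2/2)$ for all $s\in\mathbb{R}$. $\|\cdot\|$ on matrices is the Euclidean operator norm. $S^{m-1}=\{x\in\mathbb{R}^m:\|x\|=1\}$; an $\epsilon$-net of $S^{m-1}$ is a set $C\subseteq S^{m-1}$ such that every $x\in S^{m-1}$ has $x'\in C$ with $\|x-x'\|\le\epsilon$; $\mathcal{N}_m(\epsilon)$ is the minimal size of such a net. *)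

theory Defs
  imports "HOL-Analysis.Analysis" "HOL-Probability.Probability"
begin

definition subgaussian :: "'w measure \<Rightarrow> ('w \<Rightarrow> real) \<Rightarrow> real \<Rightarrow> bool" where
  "subgaussian M Z B \<longleftrightarrow>
     (\<forall>s::real. integrable M (\<lambda>w. exp (s * Z w)) \<and>
        (\<integral>w. exp (s * Z w) \<partial>M) \<le> exp (s\<^sup>2 * B\<^sup>2 / 2))"

definition diagonal_mat :: "real^'n^'n \<Rightarrow> bool" where
  "diagonal_mat A \<longleftrightarrow> (\<forall>i j. i \<noteq> j \<longrightarrow> A $ i $ j = 0)"

definition psd_mat :: "real^'n^'n \<Rightarrow> bool" where
  "psd_mat A \<longleftrightarrow> transpose A = A \<and> (\<forall>x. 0 \<le> x \<bullet> (A *v x))"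

definition diag_sqrt :: "real^'n^'n \<Rightarrow> real^'n^'n" where
  "diag_sqrt A = (\<chi> i j. if i = j then sqrt (A $ i $ i) else 0)"

definition op_norm :: "real^'m^'n \<Rightarrow> real" where
  "op_norm A = onorm (\<lambda>x. A *v x)"

definition is_eps_net :: "'a::metric_space set \<Rightarrow> real \<Rightarrow> 'a set \<Rightarrow> bool" where
  "is_eps_net S \<epsilon> C \<longleftrightarrow> C \<subseteq> S \<and> (\<forall>x\<in>S. \<exists>x'\<in>C. dist x x' \<le> \<epsilon>)"

definition net_number :: "'a::metric_space set \<Rightarrow> real \<Rightarrow> nat" where
  "net_number S \<epsilon> = (LEAST n. \<exists>C. finite C \<and> card C = n \<and> is_eps_net S \<epsilon> C)"

end

theory Submission
  imports Defs
begin

(* The proof is the classical net argument combined with Gaussian linearisation.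
   (1) If ||A|| >= t and C is an eps-net of the unit sphere, some x in C has
       ||A x|| >= t (1 - eps); hence a union bound over a minimal net reduces the
       theorem to a tail bound for ||sqrt(Sigma) Y x|| with x a fixed unit vector.
   (2) For fixed x, the exponential Markov inequality reduces this to bounding
       E exp(Q / (4 B^2)) with Q = ||sqrt(Sigma) Y x||^2.
   (3) Writing exp(|v|^2/2) = E_g exp(<v, g>) for a standard Gaussian vector g
       (Hubbard-Stratonovich) and swapping the integrals, independence and the
       sub-Gaussian hypothesis bound the inner expectation by exp(sum sigma_i g_i^2/4);
       the outer Gaussian integral of this equals prod (1 - sigma_i/2)^(-1/2),
       which is at most exp(tr Sigma / 2). *)


section \<open>One-dimensional Gaussian integrals\<close>

lemma prob_space_std_normal: "prob_space std_normal_distribution"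
  using real_dist_normal_dist real_distribution.axioms(1) by blast

lemma nn_integral_normal_density:
  "0 < \<sigma> \<Longrightarrow> (\<integral>\<^sup>+x. ennreal (normal_density \<mu> \<sigma> x) \<partial>lborel) = 1"
  by (subst nn_integral_eq_integral) (auto simp: integrable_normal_density)

text \<open>Moment generating function of the standard normal distribution:
  completing the square turns the integrand into a shifted normal density.\<close>
lemma std_normal_mgf:
  "(\<integral>\<^sup>+x. ennreal (exp (a * x)) \<partial>std_normal_distribution) = ennreal (exp (a\<^sup>2 / 2))"
proof -
  have shift: "std_normal_density x * exp (a * x) = exp (a\<^sup>2 / 2) * normal_density a 1 x" for x
  proof -
    have "- x\<^sup>2 / 2 + a * x = a\<^sup>2 / 2 + (- (x - a)\<^sup>2 / 2)"
      by (simp add: power2_eq_square field_simps)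
    then have "exp (- x\<^sup>2 / 2) * exp (a * x) = exp (a\<^sup>2 / 2) * exp (- (x - a)\<^sup>2 / 2)"
      by (metis exp_add)
    then show ?thesis unfolding std_normal_density_def normal_density_def by simp
  qed
  have "(\<integral>\<^sup>+x. ennreal (exp (a * x)) \<partial>std_normal_distribution)
      = (\<integral>\<^sup>+x. ennreal (exp (a\<^sup>2 / 2)) * ennreal (normal_density a 1 x) \<partial>lborel)"
    by (subst nn_integral_density) (auto intro!: nn_integral_cong simp: shift ennreal_mult'[symmetric])
  also have "\<dots> = ennreal (exp (a\<^sup>2 / 2))"
    by (subst nn_integral_cmult) (auto simp: nn_integral_normal_density)
  finally show ?thesis .
qed

text \<open>The exponential square moment: for \<open>0 \<le> c < 1/2\<close>, the integrand is a
  centred normal density of variance \<open>1/(1 - 2c)\<close>, up to the factor \<open>1/sqrt(1 - 2c)\<close>.\<close>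
lemma std_normal_square_mgf:
  assumes "0 \<le> c" "c < 1/2"
  shows "(\<integral>\<^sup>+x. ennreal (exp (c * x\<^sup>2)) \<partial>std_normal_distribution) = ennreal (1 / sqrt (1 - 2 * c))"
proof -
  define s where "s = 1 / sqrt (1 - 2 * c)"
  have pos: "0 < 1 - 2 * c" using assms by simp
  have s_sq: "s\<^sup>2 = 1 / (1 - 2 * c)" unfolding s_def using pos by (simp add: power_divide)
  have s_pos: "s > 0" unfolding s_def using pos by simp
  have rescale: "std_normal_density x * exp (c * x\<^sup>2) = s * normal_density 0 s x" for x
  proof -
    have "- x\<^sup>2 / 2 + c * x\<^sup>2 = - (x - 0)\<^sup>2 / (2 * s\<^sup>2)"
      using pos by (simp add: s_sq field_simps)
    then have "exp (- x\<^sup>2 / 2) * exp (c * x\<^sup>2) = exp (- (x - 0)\<^sup>2 / (2 * s\<^sup>2))"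
      by (metis exp_add)
    moreover have "sqrt (2 * pi * s\<^sup>2) = sqrt (2 * pi) * s"
      using s_pos by (simp add: real_sqrt_mult)
    ultimately show ?thesis unfolding std_normal_density_def normal_density_def
      using s_pos by (simp add: field_simps)
  qed
  have "(\<integral>\<^sup>+x. ennreal (exp (c * x\<^sup>2)) \<partial>std_normal_distribution)
      = (\<integral>\<^sup>+x. ennreal s * ennreal (normal_density 0 s x) \<partial>lborel)"
    using s_pos
    by (subst nn_integral_density) (auto intro!: nn_integral_cong simp: rescale ennreal_mult'[symmetric])
  also have "\<dots> = ennreal s"
    by (subst nn_integral_cmult) (auto simp: nn_integral_normal_density s_pos)
  finally show ?thesis unfolding s_def .
qed

text \<open>The elementary inequality \<open>(1 - \<sigma>/2)^(-1/2) \<le> exp(\<sigma>/2)\<close> on \<open>[0, 1]\<close>, which turns the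
  Gaussian square moments into the factor \<open>exp(tr \<Sigma> / 2)\<close>.\<close>
lemma inv_sqrt_le_exp:
  assumes "0 \<le> \<sigma>" "\<sigma> \<le> 1"
  shows "1 / sqrt (1 - 2 * (\<sigma> / 4)) \<le> exp (\<sigma> / 2)"
proof -
  define u where "u = \<sigma> / 2"
  have u: "0 \<le> u" "u \<le> 1/2" using assms unfolding u_def by auto
  have exp_sq: "exp (2 * u) = (exp u)\<^sup>2" by (metis exp_add mult_2 power2_eq_square)
  have "(1 + u)\<^sup>2 \<le> (exp u)\<^sup>2"
    using u exp_ge_add_one_self[of u] by (intro power_mono) auto
  moreover have "1 \<le> (1 + u)\<^sup>2 * (1 - u)"
  proof -
    have "u\<^sup>2 \<le> 1/4" using u mult_mono[of u "1/2" u "1/2"] by (simp add: power2_eq_square)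
    moreover have "(1 + u)\<^sup>2 * (1 - u) = 1 + u * (1 - u - u\<^sup>2)"
      by (simp add: power2_eq_square algebra_simps)
    ultimately show ?thesis using u by simp
  qed
  ultimately have "1 \<le> (exp u)\<^sup>2 * (1 - u)"
    using mult_right_mono[of "(1 + u)\<^sup>2" "(exp u)\<^sup>2" "1 - u"] u by linarith
  then have "1 \<le> exp u * sqrt (1 - u)"
    using u real_sqrt_le_mono[of 1 "(exp u)\<^sup>2 * (1 - u)"] by (simp add: real_sqrt_mult)
  moreover have "1 - 2 * (\<sigma> / 4) = 1 - u" "sqrt (1 - u) > 0" using u unfolding u_def by auto
  ultimately show ?thesis unfolding u_def by (simp add: divide_le_eq mult.commute)
qed


section \<open>Standard Gaussian vectors\<close>

abbreviation std_gaussian :: "('i::finite \<Rightarrow> real) measure" where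
  "std_gaussian \<equiv> PiM UNIV (\<lambda>_. std_normal_distribution)"

lemma product_sigma_finite_std_normal:
  "product_sigma_finite (\<lambda>_::'i. std_normal_distribution)"
  by (simp add: product_sigma_finite_def prob_space_imp_sigma_finite prob_space_std_normal)

lemma prob_space_std_gaussian: "prob_space (std_gaussian :: ('i::finite \<Rightarrow> real) measure)"
  by (rule prob_space_PiM) (rule prob_space_std_normal)

text \<open>Gaussian linearisation of a squared norm (Hubbard-Stratonovich):
  \<open>exp(|v|\<^sup>2/2) = E exp(\<langle>v, g\<rangle>)\<close> for a standard Gaussian vector \<open>g\<close>.\<close>
lemma std_gaussian_linearization:
  fixes v :: "'i::finite \<Rightarrow> real"
  shows "ennreal (exp ((\<Sum>i\<in>UNIV. (v i)\<^sup>2) / 2))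
       = (\<integral>\<^sup>+g. (\<Prod>i\<in>UNIV. ennreal (exp (v i * g i))) \<partial>std_gaussian)"
proof -
  interpret product_sigma_finite "\<lambda>_::'i. std_normal_distribution"
    by (rule product_sigma_finite_std_normal)
  have "(\<integral>\<^sup>+g. (\<Prod>i\<in>UNIV. ennreal (exp (v i * g i))) \<partial>std_gaussian)
      = (\<Prod>i\<in>UNIV. \<integral>\<^sup>+y. ennreal (exp (v i * y)) \<partial>std_normal_distribution)"
    by (rule product_nn_integral_prod) auto
  also have "\<dots> = ennreal (exp ((\<Sum>i\<in>UNIV. (v i)\<^sup>2) / 2))"
    by (simp add: std_normal_mgf prod_ennreal exp_sum sum_divide_distrib)
  finally show ?thesis ..
qed

lemma std_gaussian_square_mgf:
  fixes \<sigma> :: "'i::finite \<Rightarrow> real"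
  assumes "\<And>i. 0 \<le> \<sigma> i" "\<And>i. \<sigma> i \<le> 1"
  shows "(\<integral>\<^sup>+g. ennreal (exp (\<Sum>i\<in>UNIV. \<sigma> i / 4 * (g i)\<^sup>2)) \<partial>std_gaussian)
       \<le> ennreal (exp ((\<Sum>i\<in>UNIV. \<sigma> i) / 2))"
proof -
  interpret product_sigma_finite "\<lambda>_::'i. std_normal_distribution"
    by (rule product_sigma_finite_std_normal)
  have "(\<integral>\<^sup>+g. ennreal (exp (\<Sum>i\<in>UNIV. \<sigma> i / 4 * (g i)\<^sup>2)) \<partial>std_gaussian)
      = (\<integral>\<^sup>+g. (\<Prod>i\<in>UNIV. ennreal (exp (\<sigma> i / 4 * (g i)\<^sup>2))) \<partial>std_gaussian)"
    by (simp add: exp_sum prod_ennreal)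
  also have "\<dots> = (\<Prod>i\<in>UNIV. \<integral>\<^sup>+y. ennreal (exp (\<sigma> i / 4 * y\<^sup>2)) \<partial>std_normal_distribution)"
    by (rule product_nn_integral_prod) auto
  also have "\<dots> = (\<Prod>i\<in>UNIV. ennreal (1 / sqrt (1 - 2 * (\<sigma> i / 4))))"
  proof (intro prod.cong refl std_normal_square_mgf)
    show "0 \<le> \<sigma> i / 4" "\<sigma> i / 4 < 1/2" for i using assms(1,2)[of i] by simp_all
  qed
  also have "\<dots> \<le> (\<Prod>i\<in>UNIV. ennreal (exp (\<sigma> i / 2)))"
    using assms by (intro prod_mono_ennreal ennreal_leI inv_sqrt_le_exp)
  also have "\<dots> = ennreal (exp ((\<Sum>i\<in>UNIV. \<sigma> i) / 2))"
    by (simp add: prod_ennreal exp_sum sum_divide_distrib)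
  finally show ?thesis .
qed


section \<open>Independent sub-Gaussian variables\<close>

text \<open>Independence factorises the moment generating function of a linear combination,
  so a linear combination of independent \<open>B\<close>-sub-Gaussian variables with weights \<open>a\<close>
  is \<open>|a| B\<close>-sub-Gaussian.\<close>
lemma indep_subgaussian_mgf:
  fixes X :: "'k::finite \<Rightarrow> 'w \<Rightarrow> real"
  assumes M: "prob_space M"
    and indep: "prob_space.indep_vars M (\<lambda>_. borel) X UNIV"
    and subg: "\<And>k. subgaussian M (X k) B"
  shows "(\<integral>\<^sup>+w. (\<Prod>k\<in>UNIV. ennreal (exp (a k * X k w))) \<partial>M)
       \<le> ennreal (exp ((\<Sum>k\<in>UNIV. (a k)\<^sup>2) * B\<^sup>2 / 2))"
proof -
  interpret prob_space M by (rule M)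
  have indep_exp: "indep_vars (\<lambda>_. borel) (\<lambda>k w. ennreal (exp (a k * X k w))) UNIV"
    by (rule indep_vars_compose2[OF indep]) simp
  have mgf: "(\<integral>\<^sup>+w. ennreal (exp (a k * X k w)) \<partial>M) \<le> ennreal (exp ((a k)\<^sup>2 * B\<^sup>2 / 2))" for k
  proof -
    have "integrable M (\<lambda>w. exp (a k * X k w))"
      and "(\<integral>w. exp (a k * X k w) \<partial>M) \<le> exp ((a k)\<^sup>2 * B\<^sup>2 / 2)"
      using subg[of k] unfolding subgaussian_def by auto
    then show ?thesis by (simp add: nn_integral_eq_integral ennreal_leI)
  qed
  have "(\<integral>\<^sup>+w. (\<Prod>k\<in>UNIV. ennreal (exp (a k * X k w))) \<partial>M)
      = (\<Prod>k\<in>UNIV. \<integral>\<^sup>+w. ennreal (exp (a k * X k w)) \<partial>M)"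
    by (rule indep_vars_nn_integral[OF _ indep_exp]) auto
  also have "\<dots> \<le> (\<Prod>k\<in>UNIV. ennreal (exp ((a k)\<^sup>2 * B\<^sup>2 / 2)))"
    by (intro prod_mono_ennreal mgf)
  also have "\<dots> = ennreal (exp ((\<Sum>k\<in>UNIV. (a k)\<^sup>2) * B\<^sup>2 / 2))"
    by (simp add: prod_ennreal exp_sum sum_distrib_right sum_divide_distrib)
  finally show ?thesis .
qed

text \<open>For a unit vector \<open>x\<close>, the random vector \<open>W\<^sub>i = sqrt(\<sigma>\<^sub>i) \<Sum>\<^sub>j Y\<^sub>i\<^sub>j x\<^sub>j\<close> has moment
  generating function \<open>E exp(\<langle>h, W\<rangle>) \<le> exp(B\<^sup>2/2 \<Sum>\<^sub>i \<sigma>\<^sub>i h\<^sub>i\<^sup>2)\<close>: \<open>\<langle>h, W\<rangle>\<close> is a linear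
  combination of the entries \<open>Y\<^sub>i\<^sub>j\<close> with weights \<open>h\<^sub>i sqrt(\<sigma>\<^sub>i) x\<^sub>j\<close>.\<close>
lemma weighted_projection_mgf:
  fixes Y :: "'d::finite \<Rightarrow> 'm::finite \<Rightarrow> 'w \<Rightarrow> real"
    and \<sigma> h :: "'d \<Rightarrow> real" and x :: "'m \<Rightarrow> real"
  assumes M: "prob_space M"
    and indep: "prob_space.indep_vars M (\<lambda>_. borel) (\<lambda>(i, j). Y i j) UNIV"
    and subg: "\<And>i j. subgaussian M (Y i j) B"
    and \<sigma>: "\<And>i. 0 \<le> \<sigma> i"
    and unit: "(\<Sum>j\<in>UNIV. (x j)\<^sup>2) = 1"
  shows "(\<integral>\<^sup>+w. (\<Prod>i\<in>UNIV. ennreal (exp (h i * (sqrt (\<sigma> i) * (\<Sum>j\<in>UNIV. Y i j w * x j))))) \<partial>M)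
       \<le> ennreal (exp (B\<^sup>2 / 2 * (\<Sum>i\<in>UNIV. \<sigma> i * (h i)\<^sup>2)))"
proof -
  define a where "a = (\<lambda>(i, j). h i * sqrt (\<sigma> i) * x j)"
  have integrand: "(\<Prod>i\<in>UNIV. ennreal (exp (h i * (sqrt (\<sigma> i) * (\<Sum>j\<in>UNIV. Y i j w * x j)))))
      = (\<Prod>k\<in>UNIV. ennreal (exp (a k * (\<lambda>(i, j). Y i j) k w)))" for w
  proof -
    have "h i * (sqrt (\<sigma> i) * (\<Sum>j\<in>UNIV. Y i j w * x j)) = (\<Sum>j\<in>UNIV. a (i, j) * Y i j w)" for i
      unfolding a_def by (simp add: sum_distrib_left mult_ac)
    then have "(\<Prod>i\<in>UNIV. ennreal (exp (h i * (sqrt (\<sigma> i) * (\<Sum>j\<in>UNIV. Y i j w * x j)))))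
        = (\<Prod>i\<in>UNIV. \<Prod>j\<in>UNIV. ennreal (exp (a (i, j) * Y i j w)))"
      by (simp add: exp_sum prod_ennreal)
    then show ?thesis by (simp add: prod.cartesian_product UNIV_Times_UNIV case_prod_beta)
  qed
  have weights: "(\<Sum>k\<in>UNIV. (a k)\<^sup>2) = (\<Sum>i\<in>UNIV. \<sigma> i * (h i)\<^sup>2)"
  proof -
    have "(\<Sum>k\<in>UNIV. (a k)\<^sup>2) = (\<Sum>k\<in>UNIV \<times> UNIV. (a k)\<^sup>2)"
      by (simp add: UNIV_Times_UNIV)
    also have "\<dots> = (\<Sum>i\<in>UNIV. \<Sum>j\<in>UNIV. \<sigma> i * (h i)\<^sup>2 * (x j)\<^sup>2)"
      unfolding sum.cartesian_product a_def using \<sigma>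
      by (intro sum.cong) (auto simp: power_mult_distrib mult_ac)
    also have "\<dots> = (\<Sum>i\<in>UNIV. \<sigma> i * (h i)\<^sup>2)"
      by (simp add: unit flip: sum_distrib_left)
    finally show ?thesis .
  qed
  have "(\<integral>\<^sup>+w. (\<Prod>k\<in>UNIV. ennreal (exp (a k * (\<lambda>(i, j). Y i j) k w))) \<partial>M)
      \<le> ennreal (exp ((\<Sum>k\<in>UNIV. (a k)\<^sup>2) * B\<^sup>2 / 2))"
    by (intro indep_subgaussian_mgf[OF M indep]) (simp add: case_prod_beta subg)
  then show ?thesis unfolding integrand weights by (simp add: mult_ac)
qed

text \<open>Linearise \<open>exp(Q / (4B\<^sup>2))\<close> with a Gaussian vector \<open>g\<close>, swap the integrals (Tonelli),
  bound the expectation over \<open>Y\<close> for fixed \<open>g\<close> by the projection estimate (with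
  \<open>h = g / (sqrt 2 B)\<close>), and integrate the resulting Gaussian square moment over \<open>g\<close>.\<close>
lemma quadratic_form_mgf:
  fixes Y :: "'d::finite \<Rightarrow> 'm::finite \<Rightarrow> 'w \<Rightarrow> real"
    and \<sigma> :: "'d \<Rightarrow> real" and x :: "'m \<Rightarrow> real"
  assumes M: "prob_space M" and B: "B > 0"
    and Y_meas[measurable]: "\<And>i j. Y i j \<in> borel_measurable M"
    and indep: "prob_space.indep_vars M (\<lambda>_. borel) (\<lambda>(i, j). Y i j) UNIV"
    and subg: "\<And>i j. subgaussian M (Y i j) B"
    and \<sigma>: "\<And>i. 0 \<le> \<sigma> i" "\<And>i. \<sigma> i \<le> 1"
    and unit: "(\<Sum>j\<in>UNIV. (x j)\<^sup>2) = 1"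
  shows "(\<integral>\<^sup>+w. ennreal (exp ((\<Sum>i\<in>UNIV. (sqrt (\<sigma> i) * (\<Sum>j\<in>UNIV. Y i j w * x j))\<^sup>2) / (4 * B\<^sup>2))) \<partial>M)
       \<le> ennreal (exp ((\<Sum>i\<in>UNIV. \<sigma> i) / 2))"
proof -
  interpret M: prob_space M by (rule M)
  interpret G: prob_space "std_gaussian :: ('d \<Rightarrow> real) measure" by (rule prob_space_std_gaussian)
  interpret pair_sigma_finite M "std_gaussian :: ('d \<Rightarrow> real) measure"
    by (simp add: pair_sigma_finite_def M.sigma_finite_measure_axioms G.sigma_finite_measure_axioms)
  define c where "c = 1 / (sqrt 2 * B)"
  have c_sq: "c\<^sup>2 = 1 / (2 * B\<^sup>2)" unfolding c_def using B by (simp add: power_mult_distrib power_divide)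
  define W where "W i w = sqrt (\<sigma> i) * (\<Sum>j\<in>UNIV. Y i j w * x j)" for i w
  define F where "F w g = (\<Prod>i\<in>UNIV. ennreal (exp (c * W i w * g i)))" for w and g :: "'d \<Rightarrow> real"
  have linearized: "ennreal (exp ((\<Sum>i\<in>UNIV. (W i w)\<^sup>2) / (4 * B\<^sup>2))) = (\<integral>\<^sup>+g. F w g \<partial>std_gaussian)" for w
  proof -
    have "(\<Sum>i\<in>UNIV. (c * W i w)\<^sup>2) / 2 = (\<Sum>i\<in>UNIV. (W i w)\<^sup>2) / (4 * B\<^sup>2)"
      by (simp add: power_mult_distrib c_sq sum_divide_distrib)
    then show ?thesis
      unfolding F_def using std_gaussian_linearization[of "\<lambda>i. c * W i w"] by (simp add: mult_ac)
  qed
  have inner: "(\<integral>\<^sup>+w. F w g \<partial>M) \<le> ennreal (exp (\<Sum>i\<in>UNIV. \<sigma> i / 4 * (g i)\<^sup>2))" for g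
  proof -
    have "B\<^sup>2 / 2 * (\<Sum>i\<in>UNIV. \<sigma> i * (c * g i)\<^sup>2) = (\<Sum>i\<in>UNIV. \<sigma> i / 4 * (g i)\<^sup>2)"
      using B by (simp add: power_mult_distrib c_sq sum_distrib_left)
    then show ?thesis
      using weighted_projection_mgf[OF M indep subg, where \<sigma>=\<sigma> and x=x and h="\<lambda>i. c * g i"] \<sigma>(1) unit
      unfolding F_def W_def by (simp add: mult_ac)
  qed
  have "(\<integral>\<^sup>+w. ennreal (exp ((\<Sum>i\<in>UNIV. (W i w)\<^sup>2) / (4 * B\<^sup>2))) \<partial>M)
      = (\<integral>\<^sup>+g. (\<integral>\<^sup>+w. F w g \<partial>M) \<partial>std_gaussian)"
  proof -
    have "(\<lambda>(w, g). F w g) \<in> borel_measurable (M \<Otimes>\<^sub>M std_gaussian)"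
      unfolding F_def W_def by measurable
    then show ?thesis unfolding linearized by (rule Fubini'[symmetric])
  qed
  also have "\<dots> \<le> (\<integral>\<^sup>+g. ennreal (exp (\<Sum>i\<in>UNIV. \<sigma> i / 4 * (g i)\<^sup>2)) \<partial>std_gaussian)"
    by (intro nn_integral_mono inner)
  also have "\<dots> \<le> ennreal (exp ((\<Sum>i\<in>UNIV. \<sigma> i) / 2))"
    by (rule std_gaussian_square_mgf[OF \<sigma>])
  finally show ?thesis unfolding W_def .
qed


lemma exponential_markov:
  assumes M: "prob_space M" and Q_meas: "Q \<in> borel_measurable M" and c: "0 \<le> c"
    and K: "0 \<le> K" and mgf: "(\<integral>\<^sup>+w. ennreal (exp (c * Q w)) \<partial>M) \<le> ennreal K"
  shows "measure M {w \<in> space M. r \<le> Q w} \<le> exp (- c * r) * K"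
proof -
  interpret prob_space M by (rule M)
  define E where "E = {w \<in> space M. r \<le> Q w}"
  have E_sets: "E \<in> sets M" unfolding E_def using Q_meas by measurable
  have "indicator E w \<le> ennreal (exp (- c * r)) * ennreal (exp (c * Q w))" for w
  proof (cases "w \<in> E")
    case True
    then have "0 \<le> - c * r + c * Q w" using c unfolding E_def by (simp add: mult_left_mono)
    then have "1 \<le> exp (- c * r) * exp (c * Q w)" by (simp flip: exp_add)
    then show ?thesis using True by (simp flip: ennreal_mult')
  qed simp
  then have "emeasure M E \<le> (\<integral>\<^sup>+w. ennreal (exp (- c * r)) * ennreal (exp (c * Q w)) \<partial>M)"
    using E_sets by (simp flip: nn_integral_indicator add: nn_integral_mono)
  also have "\<dots> = ennreal (exp (- c * r)) * (\<integral>\<^sup>+w. ennreal (exp (c * Q w)) \<partial>M)"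
    using Q_meas by (intro nn_integral_cmult) measurable
  also have "\<dots> \<le> ennreal (exp (- c * r) * K)"
    using mgf by (simp add: ennreal_mult' mult_left_mono)
  finally show ?thesis
    unfolding E_def using K by (simp add: emeasure_eq_measure ennreal_le_iff)
qed


lemma psd_diag_nonneg:
  fixes A :: "real^'n^'n"
  assumes "psd_mat A"
  shows "0 \<le> A $ i $ i"
proof -
  have "(A *v axis i 1) $ i = A $ i $ i"
    by (simp add: matrix_vector_mult_def axis_def if_distrib sum.delta cong: if_cong)
  then have "axis i 1 \<bullet> (A *v axis i 1) = A $ i $ i" by (simp add: inner_axis')
  with assms show ?thesis unfolding psd_mat_def by metis
qed

lemma norm_diag_sqrt_mult:
  fixes S :: "real^'d^'d" and Z :: "real^'m^'d" and x :: "real^'m"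
  shows "norm ((diag_sqrt S ** Z) *v x)
       = sqrt (\<Sum>i\<in>UNIV. (sqrt (S $ i $ i) * (\<Sum>j\<in>UNIV. Z $ i $ j * x $ j))\<^sup>2)"
proof -
  have entry: "(diag_sqrt S ** Z) $ i $ j = sqrt (S $ i $ i) * Z $ i $ j" for i j
  proof -
    have "(diag_sqrt S ** Z) $ i $ j = (\<Sum>k\<in>UNIV. (if i = k then sqrt (S $ i $ i) else 0) * Z $ k $ j)"
      by (simp add: matrix_matrix_mult_def diag_sqrt_def)
    also have "\<dots> = (\<Sum>k\<in>UNIV. if k = i then sqrt (S $ i $ i) * Z $ i $ j else 0)"
      by (intro sum.cong) auto
    finally show ?thesis by simp
  qed
  have "((diag_sqrt S ** Z) *v x) $ i = sqrt (S $ i $ i) * (\<Sum>j\<in>UNIV. Z $ i $ j * x $ j)" for i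
    by (simp add: matrix_vector_mult_def entry sum_distrib_left mult_ac)
  then show ?thesis by (simp add: norm_vec_def L2_set_def)
qed

lemma sum_sq_unit_vector:
  fixes x :: "real^'m"
  assumes "norm x = 1"
  shows "(\<Sum>j\<in>UNIV. (x $ j)\<^sup>2) = 1"
  using assms by (simp add: norm_vec_def L2_set_def)

lemma unit_vector_tail:
  fixes M :: "'w measure" and Y :: "'d::finite \<Rightarrow> 'm::finite \<Rightarrow> 'w \<Rightarrow> real"
    and \<Sigma> :: "real^'d^'d" and x :: "real^'m"
  assumes M: "prob_space M" and B: "B > 0"
    and Y_meas[measurable]: "\<And>i j. Y i j \<in> borel_measurable M"
    and indep: "prob_space.indep_vars M (\<lambda>_. borel) (\<lambda>(i, j). Y i j) UNIV"
    and subg: "\<And>i j. subgaussian M (Y i j) B"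
    and \<Sigma>: "psd_mat \<Sigma>" "psd_mat (mat 1 - \<Sigma>)"
    and x: "norm x = 1" and s: "0 \<le> s"
  shows "measure M {w \<in> space M. s \<le> norm ((diag_sqrt \<Sigma> ** (\<chi> i j. Y i j w)) *v x)}
       \<le> exp (trace \<Sigma> / 2 - s\<^sup>2 / (4 * B\<^sup>2))"
proof -
  define Q where "Q w = (\<Sum>i\<in>UNIV. (sqrt (\<Sigma> $ i $ i) * (\<Sum>j\<in>UNIV. Y i j w * x $ j))\<^sup>2)" for w
  have \<sigma>: "0 \<le> \<Sigma> $ i $ i" "\<Sigma> $ i $ i \<le> 1" for i
    using psd_diag_nonneg[OF \<Sigma>(1), of i] psd_diag_nonneg[OF \<Sigma>(2), of i] by (simp_all add: mat_def)
  have event: "{w \<in> space M. s \<le> norm ((diag_sqrt \<Sigma> ** (\<chi> i j. Y i j w)) *v x)}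
      = {w \<in> space M. s\<^sup>2 \<le> Q w}"
  proof -
    have "s \<le> sqrt (Q w) \<longleftrightarrow> s\<^sup>2 \<le> Q w" for w
      using s real_le_rsqrt real_sqrt_le_iff[of "s\<^sup>2" "Q w"] by auto
    then show ?thesis unfolding norm_diag_sqrt_mult Q_def by simp
  qed
  have "(\<integral>\<^sup>+w. ennreal (exp (1 / (4 * B\<^sup>2) * Q w)) \<partial>M) \<le> ennreal (exp (trace \<Sigma> / 2))"
    using quadratic_form_mgf[OF M B Y_meas indep subg \<sigma>, of "\<lambda>j. x $ j"] sum_sq_unit_vector[OF x]
    unfolding Q_def trace_def by simp
  then have "measure M {w \<in> space M. s\<^sup>2 \<le> Q w} \<le> exp (- (1 / (4 * B\<^sup>2)) * s\<^sup>2) * exp (trace \<Sigma> / 2)"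
    by (intro exponential_markov[OF M]) (auto simp: Q_def)
  then show ?thesis unfolding event by (simp add: mult.commute flip: exp_add)
qed


section \<open>Nets of the unit sphere\<close>

text \<open>By compactness the unit sphere has finite \<open>\<epsilon>\<close>-nets; hence a net of minimal size exists.\<close>
lemma minimal_net_exists:
  assumes "0 < \<epsilon>"
  obtains C where "finite C" "card C = net_number (sphere (0::'a::euclidean_space) 1) \<epsilon>"
    "is_eps_net (sphere (0::'a) 1) \<epsilon> C"
proof -
  have cover: "sphere (0::'a) 1 \<subseteq> (\<Union>c\<in>sphere 0 1. ball c \<epsilon>)" using assms by force
  obtain T where T: "T \<subseteq> sphere (0::'a) 1" "finite T" "sphere (0::'a) 1 \<subseteq> (\<Union>c\<in>T. ball c \<epsilon>)"
    using compactE_image[OF compact_sphere _ cover] by auto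
  then have "is_eps_net (sphere 0 1) \<epsilon> T"
    unfolding is_eps_net_def by (force simp: dist_commute less_imp_le)
  with T(2) have "\<exists>n C. finite C \<and> card C = n \<and> is_eps_net (sphere (0::'a) 1) \<epsilon> C" by blast
  then have "\<exists>C. finite C \<and> card C = net_number (sphere (0::'a) 1) \<epsilon> \<and> is_eps_net (sphere (0::'a) 1) \<epsilon> C"
    unfolding net_number_def by (rule LeastI_ex)
  then show ?thesis using that by blast
qed

text \<open>The operator norm is almost attained on a net: if \<open>t \<le> |A|\<close> and \<open>C\<close> is an \<open>\<epsilon>\<close>-net of
  the sphere, then \<open>|A x| \<ge> (1 - \<epsilon>) t\<close> for some \<open>x \<in> C\<close>, since
  \<open>|A| \<le> max\<^sub>C |A x| + \<epsilon> |A|\<close>.\<close>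
lemma net_witness:
  fixes A :: "real^'m^'d" and C :: "(real^'m) set"
  assumes C: "finite C" "is_eps_net (sphere 0 1) \<epsilon> C"
    and \<epsilon>: "0 \<le> \<epsilon>" "\<epsilon> < 1" and t: "t \<le> op_norm A"
  shows "\<exists>x\<in>C. t * (1 - \<epsilon>) \<le> norm (A *v x)"
proof (rule ccontr)
  assume "\<not> ?thesis"
  then have small: "\<forall>x\<in>C. norm (A *v x) < t * (1 - \<epsilon>)" by auto
  have "\<exists>x. x \<in> C"
    using C(2) norm_axis_1 unfolding is_eps_net_def by (metis dist_0_norm mem_sphere)
  then have "C \<noteq> {}" by blast
  define m where "m = Max ((\<lambda>x. norm (A *v x)) ` C)"
  have m_less: "m < t * (1 - \<epsilon>)" unfolding m_def using C(1) \<open>C \<noteq> {}\<close> small by simp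
  have le_m: "norm (A *v x) \<le> m" if "x \<in> C" for x unfolding m_def using C(1) that by simp
  have lin: "bounded_linear (\<lambda>x. A *v x)" by simp
  have "op_norm A \<le> m + \<epsilon> * op_norm A" unfolding op_norm_def
  proof (rule onorm_le)
    fix u :: "real^'m"
    show "norm (A *v u) \<le> (m + \<epsilon> * onorm ((*v) A)) * norm u"
    proof (cases "u = 0")
      case False
      define u' where "u' = u /\<^sub>R norm u"
      have "u' \<in> sphere 0 1" unfolding u'_def using False by simp
      with C(2) obtain x where x: "x \<in> C" "dist u' x \<le> \<epsilon>" unfolding is_eps_net_def by blast
      have "norm (A *v u') \<le> norm (A *v x) + norm (A *v (u' - x))"
        by (metis matrix_vector_mult_diff_distrib norm_triangle_ineq2 diff_add_cancel norm_triangle_ineq add.commute)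
      also have "norm (A *v (u' - x)) \<le> onorm ((*v) A) * norm (u' - x)"
        using onorm[OF lin] by simp
      also have "\<dots> \<le> onorm ((*v) A) * \<epsilon>"
        using x(2) onorm_pos_le[OF lin] by (intro mult_left_mono) (auto simp: dist_norm)
      finally have "norm (A *v u') \<le> m + \<epsilon> * onorm ((*v) A)"
        using le_m[OF x(1)] by (simp add: mult.commute)
      moreover have "A *v u = norm u *\<^sub>R (A *v u')"
        unfolding u'_def using False by (simp add: matrix_vector_mult_scaleR)
      ultimately show ?thesis using False by (simp add: mult.commute mult_left_mono)
    qed simp
  qed
  then have "(1 - \<epsilon>) * op_norm A < (1 - \<epsilon>) * t"
    using m_less by (simp add: algebra_simps)
  with t \<epsilon> show False by (simp add: mult_le_cancel_left)
qed


text \<open>Union bound over a minimal \<open>\<epsilon>\<close>-net \<open>C\<close>: the event \<open>|sqrt(\<Sigma>) Y| \<ge> t\<close> is covered by the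
  events \<open>|sqrt(\<Sigma>) Y x| \<ge> (1 - \<epsilon>) t\<close>, \<open>x \<in> C\<close>, each bounded by the unit-vector tail bound.\<close>
theorem mainTheorem13:
  fixes M :: "'w measure"
    and Y :: "'d::finite \<Rightarrow> 'm::finite \<Rightarrow> 'w \<Rightarrow> real"
    and \<Sigma> :: "real^'d^'d"
    and B t \<epsilon> :: real
  assumes "prob_space M"
    and "CARD('m) \<le> CARD('d)"
    and "B > 0"
    and "\<And>i j. Y i j \<in> borel_measurable M"
    and "prob_space.indep_vars M (\<lambda>_. borel) (\<lambda>(i, j). Y i j) UNIV"
    and "\<And>i j. subgaussian M (Y i j) B"
    and "diagonal_mat \<Sigma>" and "psd_mat \<Sigma>" and "psd_mat (mat 1 - \<Sigma>)"
    and "t \<ge> 0" and "0 < \<epsilon>" and "\<epsilon> < 1"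
  shows "measure M {w \<in> space M.
             op_norm (diag_sqrt \<Sigma> ** (\<chi> i j. Y i j w)) \<ge> t}
         \<le> real (net_number (sphere (0::real^'m) 1) \<epsilon>)
            * exp (trace \<Sigma> / 2 - t\<^sup>2 * (1 - \<epsilon>)\<^sup>2 / (4 * B\<^sup>2))"
proof -
  interpret prob_space M by fact
  note Y_meas[measurable] = assms(4)
  obtain C where C: "finite C" "card C = net_number (sphere (0::real^'m) 1) \<epsilon>"
    "is_eps_net (sphere (0::real^'m) 1) \<epsilon> C"
    using minimal_net_exists[OF \<open>0 < \<epsilon>\<close>] by blast
  define E where "E x = {w \<in> space M. t * (1 - \<epsilon>) \<le> norm ((diag_sqrt \<Sigma> ** (\<chi> i j. Y i j w)) *v x)}" for x
  have E_sets: "E x \<in> sets M" for x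
    unfolding E_def norm_diag_sqrt_mult vec_lambda_beta by measurable
  have E_bound: "measure M (E x) \<le> exp (trace \<Sigma> / 2 - t\<^sup>2 * (1 - \<epsilon>)\<^sup>2 / (4 * B\<^sup>2))" if "x \<in> C" for x
    using unit_vector_tail[OF assms(1,3,4,5,6,8,9), of x "t * (1 - \<epsilon>)"] C(3) that assms(10,12)
    unfolding E_def is_eps_net_def by (auto simp: power_mult_distrib)
  have "{w \<in> space M. op_norm (diag_sqrt \<Sigma> ** (\<chi> i j. Y i j w)) \<ge> t} \<subseteq> (\<Union>x\<in>C. E x)"
    using net_witness[OF C(1,3)] assms(11,12) unfolding E_def by fastforce
  then have "measure M {w \<in> space M. op_norm (diag_sqrt \<Sigma> ** (\<chi> i j. Y i j w)) \<ge> t}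
      \<le> measure M (\<Union>x\<in>C. E x)"
    using C(1) E_sets by (intro finite_measure_mono) auto
  also have "\<dots> \<le> (\<Sum>x\<in>C. measure M (E x))"
    using C(1) E_sets by (intro measure_UNION_le) auto
  also have "\<dots> \<le> real (card C) * exp (trace \<Sigma> / 2 - t\<^sup>2 * (1 - \<epsilon>)\<^sup>2 / (4 * B\<^sup>2))"
    using sum_mono[OF E_bound] by simp
  finally show ?thesis unfolding C(2) .
qed

end
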